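(* Let $\phi$ be a connected circuit all of whose constraints are strictly terraced. Then $[\![\phi]\!]$ is strictly terraced.
   Context: $e_i$ is the characteristic vector of $\{i\}$ and $\oplus$ is coordinatewise addition mod 2. A signature $F:\{0,1\}^J\to\mathbb{Q}_{\ge0}$ is strictly terraced if for all $x\in\{0,1\}^J$ and $i,j\in J$, $F(x)=0$ implies $F(x\oplus e_i)=F(x\oplus e_j)$. A circuit $\phi$ consists of: a finite set $J$ of incidences; a finite set $V$ of vertices with sets $J_v$ partitioning $J$; a set $A\subseteq J$ of external edges; a partition $E$ of $J\setminus A$ into pairs (internal edges); and constraints $F_v:\{0,1\}^{J_v}\to\mathbb{Q}_{\ge0}$. An assignment is $x\in\{0,1\}^J$ with $x_i=x_j$ for all $\{i,j\}\in E$; the signature is $[\![\phi]\!]:\{0,1\}^A\to\mathbb{Q}_{\ge0}$, $[\![\phi]\!](x)=\sum_{x'}\prod_vF_v(x'|_{J_v})$ over assignments $x'$ extending $x$. $\phi$ is connected if the multigraph on $V$ with an edge $uv$ for each $\{i,j\}\in E$, $i\in J_u$, $j\in J_v$, is connected. *)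

theory Defs
  imports Complex_Main
begin

text \<open>Boolean vectors x in {0,1}^S are represented as functions 'j => bool that are
  False (i.e. 0) outside S.  True stands for 1.\<close>

definition bvecs :: "'j set \<Rightarrow> ('j \<Rightarrow> bool) set" where
  "bvecs S = {x. \<forall>k. k \<notin> S \<longrightarrow> \<not> x k}"

definition restr :: "('j \<Rightarrow> bool) \<Rightarrow> 'j set \<Rightarrow> ('j \<Rightarrow> bool)" where
  "restr x S = (\<lambda>k. if k \<in> S then x k else False)"

definition flip :: "('j \<Rightarrow> bool) \<Rightarrow> 'j \<Rightarrow> ('j \<Rightarrow> bool)" where
  "flip x i = x(i := \<not> x i)"

definition is_signature :: "'j set \<Rightarrow> (('j \<Rightarrow> bool) \<Rightarrow> rat) \<Rightarrow> bool" where
  "is_signature S F \<longleftrightarrow> (\<forall>x \<in> bvecs S. F x \<ge> 0)"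

definition strictly_terraced :: "'j set \<Rightarrow> (('j \<Rightarrow> bool) \<Rightarrow> rat) \<Rightarrow> bool" where
  "strictly_terraced S F \<longleftrightarrow>
     (\<forall>x \<in> bvecs S. \<forall>i \<in> S. \<forall>j \<in> S. F x = 0 \<longrightarrow> F (flip x i) = F (flip x j))"

text \<open>A circuit: incidences J, vertices V, blocks Jv v (partitioning J), external
  edges A, internal edges E (a partition of J - A into pairs), constraints F v
  (a signature on Jv v).\<close>
definition circuit ::
  "'j set \<Rightarrow> 'v set \<Rightarrow> ('v \<Rightarrow> 'j set) \<Rightarrow> 'j set \<Rightarrow> 'j set set
     \<Rightarrow> ('v \<Rightarrow> ('j \<Rightarrow> bool) \<Rightarrow> rat) \<Rightarrow> bool" where
  "circuit J V Jv A E F \<longleftrightarrow>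
     finite J \<and> finite V \<and>
     (\<forall>v \<in> V. Jv v \<subseteq> J) \<and> (\<Union>v \<in> V. Jv v) = J \<and>
     (\<forall>u \<in> V. \<forall>v \<in> V. u \<noteq> v \<longrightarrow> Jv u \<inter> Jv v = {}) \<and>
     A \<subseteq> J \<and>
     (\<forall>e \<in> E. card e = 2) \<and> \<Union>E = J - A \<and>
     (\<forall>e \<in> E. \<forall>e' \<in> E. e \<noteq> e' \<longrightarrow> e \<inter> e' = {}) \<and>
     (\<forall>v \<in> V. is_signature (Jv v) (F v))"

definition assignments :: "'j set \<Rightarrow> 'j set set \<Rightarrow> ('j \<Rightarrow> bool) set" where
  "assignments J E = {x \<in> bvecs J. \<forall>e \<in> E. \<forall>i \<in> e. \<forall>j \<in> e. x i = x j}"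

definition circuit_sig ::
  "'j set \<Rightarrow> 'v set \<Rightarrow> ('v \<Rightarrow> 'j set) \<Rightarrow> 'j set \<Rightarrow> 'j set set
     \<Rightarrow> ('v \<Rightarrow> ('j \<Rightarrow> bool) \<Rightarrow> rat) \<Rightarrow> ('j \<Rightarrow> bool) \<Rightarrow> rat" where
  "circuit_sig J V Jv A E F x =
     (\<Sum>x' \<in> {x' \<in> assignments J E. \<forall>k \<in> A. x' k = x k}.
        \<Prod>v \<in> V. F v (restr x' (Jv v)))"

definition circuit_adj ::
  "'v set \<Rightarrow> ('v \<Rightarrow> 'j set) \<Rightarrow> 'j set set \<Rightarrow> ('v \<times> 'v) set" where
  "circuit_adj V Jv E = {(u, v). u \<in> V \<and> v \<in> V \<and>
     (\<exists>e \<in> E. \<exists>i \<in> e. \<exists>j \<in> e. i \<noteq> j \<and> i \<in> Jv u \<and> j \<in> Jv v)}"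

definition circuit_connected ::
  "'v set \<Rightarrow> ('v \<Rightarrow> 'j set) \<Rightarrow> 'j set set \<Rightarrow> bool" where
  "circuit_connected V Jv E \<longleftrightarrow> (\<forall>u \<in> V. \<forall>v \<in> V. (u, v) \<in> (circuit_adj V Jv E)\<^sup>*)"

end

theory Submission
  imports Defs
begin

text \<open>Fix x with [[phi]](x) = 0, so every assignment z extending x has weight 0.  Put
  H(k) = sum over these z of the weight of z xor e_k; for an external incidence l one has
  [[phi]](x xor e_l) = H(l).  H is constant on the incidences of a vertex v: the weight of z
  is F_v(z|v) times the weight of the other vertices, which are untouched by flipping k in
  Jv v, and one of these two factors vanishes, so strict terracing of F_v applies.  H agrees
  on the two ends k, k' of an internal edge, because z \<mapsto> z xor e_k xor e_k' permutes the
  assignments extending x.  Connectivity makes H constant on all incidences.\<close>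

definition weight ::
    "'v set \<Rightarrow> ('v \<Rightarrow> 'j set) \<Rightarrow> ('v \<Rightarrow> ('j \<Rightarrow> bool) \<Rightarrow> rat) \<Rightarrow> ('j \<Rightarrow> bool) \<Rightarrow> rat"
  where "weight V Jv F z = (\<Prod>v\<in>V. F v (restr z (Jv v)))"

definition extensions ::
    "'j set \<Rightarrow> 'j set set \<Rightarrow> 'j set \<Rightarrow> ('j \<Rightarrow> bool) \<Rightarrow> ('j \<Rightarrow> bool) set"
  where "extensions J E A x = {z \<in> assignments J E. \<forall>k\<in>A. z k = x k}"

lemma circuit_sig_eq_sum_weight:
  "circuit_sig J V Jv A E F x = (\<Sum>z\<in>extensions J E A x. weight V Jv F z)"
  unfolding circuit_sig_def extensions_def weight_def ..

lemma finite_bvecs: "finite J \<Longrightarrow> finite (bvecs J)"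
proof -
  assume "finite J"
  have "bvecs J \<subseteq> (\<lambda>S k. k \<in> S) ` Pow J"
  proof
    fix x assume "x \<in> bvecs J"
    then have "x = (\<lambda>k. k \<in> {k\<in>J. x k})" unfolding bvecs_def by auto
    then show "x \<in> (\<lambda>S k. k \<in> S) ` Pow J" by blast
  qed
  then show ?thesis by (rule finite_subset) (simp add: \<open>finite J\<close>)
qed

lemma finite_extensions: "finite J \<Longrightarrow> finite (extensions J E A x)"
  by (rule finite_subset[OF _ finite_bvecs]) (auto simp: extensions_def assignments_def)

lemma restr_in_bvecs: "restr z S \<in> bvecs S"
  unfolding restr_def bvecs_def by auto

lemma restr_flip_in: "k \<in> S \<Longrightarrow> restr (flip z k) S = flip (restr z S) k"
  unfolding restr_def flip_def by auto

lemma restr_flip_out: "k \<notin> S \<Longrightarrow> restr (flip z k) S = restr z S"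
  unfolding restr_def flip_def by auto

lemma flip_flip [simp]: "flip (flip z k) k = z"
  unfolding flip_def by auto

lemma flip_apply: "flip z k l = (if l = k then \<not> z k else z l)"
  unfolding flip_def by simp

lemma weight_nonneg:
  assumes "\<forall>v\<in>V. is_signature (Jv v) (F v)"
  shows "weight V Jv F z \<ge> 0"
  unfolding weight_def using assms restr_in_bvecs
  by (intro prod_nonneg) (auto simp: is_signature_def)

lemma weight_split:
  assumes "finite V" "v \<in> V"
  shows "weight V Jv F z = F v (restr z (Jv v)) * (\<Prod>u\<in>V-{v}. F u (restr z (Jv u)))"
  unfolding weight_def using prod.remove[OF assms] .

lemma weight_flip:
  assumes "finite V" "v \<in> V" "l \<in> Jv v"
    and disj: "\<forall>u\<in>V. u \<noteq> v \<longrightarrow> Jv u \<inter> Jv v = {}"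
  shows "weight V Jv F (flip z l) = F v (flip (restr z (Jv v)) l) * (\<Prod>u\<in>V-{v}. F u (restr z (Jv u)))"
proof -
  have "restr (flip z l) (Jv u) = restr z (Jv u)" if "u \<in> V - {v}" for u
    using disj that \<open>l \<in> Jv v\<close> by (intro restr_flip_out) blast
  then have "(\<Prod>u\<in>V-{v}. F u (restr (flip z l) (Jv u))) = (\<Prod>u\<in>V-{v}. F u (restr z (Jv u)))"
    by simp
  then show ?thesis
    using weight_split[OF assms(1,2), of Jv F "flip z l"] restr_flip_in[OF \<open>l \<in> Jv v\<close>] by simp
qed

lemma weight_flip_eq_at_vertex:
  assumes "finite V" "v \<in> V" "k \<in> Jv v" "k' \<in> Jv v"
    and "\<forall>u\<in>V. u \<noteq> v \<longrightarrow> Jv u \<inter> Jv v = {}"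
    and "strictly_terraced (Jv v) (F v)"
    and "weight V Jv F z = 0"
  shows "weight V Jv F (flip z k) = weight V Jv F (flip z k')"
proof -
  define Q where "Q = (\<Prod>u\<in>V-{v}. F u (restr z (Jv u)))"
  have "F v (restr z (Jv v)) = 0 \<or> Q = 0"
    using weight_split[OF assms(1,2), of Jv F z] assms(7) unfolding Q_def by simp
  moreover have "F v (restr z (Jv v)) = 0 \<Longrightarrow>
      F v (flip (restr z (Jv v)) k) = F v (flip (restr z (Jv v)) k')"
    using assms(3,4,6) restr_in_bvecs unfolding strictly_terraced_def by blast
  ultimately show ?thesis
    using weight_flip[OF assms(1,2,3,5)] weight_flip[OF assms(1,2,4,5)] unfolding Q_def by auto
qed

lemma flip_in_assignments:
  assumes "z \<in> assignments J E" "l \<in> J" "l \<notin> \<Union>E"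
  shows "flip z l \<in> assignments J E"
proof -
  have "flip z l i = flip z l j" if "e \<in> E" "i \<in> e" "j \<in> e" for e i j
  proof -
    have "i \<noteq> l" "j \<noteq> l" using assms(3) that by blast+
    moreover have "z i = z j" using assms(1) that unfolding assignments_def by blast
    ultimately show ?thesis by (simp add: flip_apply)
  qed
  moreover have "flip z l \<in> bvecs J"
    using assms(1,2) unfolding assignments_def bvecs_def by (auto simp: flip_apply)
  ultimately show ?thesis unfolding assignments_def by blast
qed

lemma flip_edge_in_assignments:
  assumes z: "z \<in> assignments J E" and e: "{k, k'} \<in> E" "k \<noteq> k'" "k \<in> J" "k' \<in> J"
    and disj: "\<forall>e\<in>E. \<forall>e'\<in>E. e \<noteq> e' \<longrightarrow> e \<inter> e' = {}"
  shows "flip (flip z k) k' \<in> assignments J E"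
proof -
  have g: "flip (flip z k) k' l = (if l \<in> {k, k'} then \<not> z l else z l)" for l
    using e(2) by (auto simp: flip_apply)
  have "flip (flip z k) k' i = flip (flip z k) k' j" if "e' \<in> E" "i \<in> e'" "j \<in> e'" for e' i j
  proof -
    have "z i = z j" using z that unfolding assignments_def by blast
    moreover have "i \<in> {k, k'} \<longleftrightarrow> j \<in> {k, k'}"
    proof (cases "e' = {k, k'}")
      case False
      then have "e' \<inter> {k, k'} = {}" using disj that(1) e(1) by simp
      then show ?thesis using that(2,3) by blast
    qed (use that in simp)
    ultimately show ?thesis by (simp only: g)
  qed
  moreover have "flip (flip z k) k' \<in> bvecs J"
    using z e(3,4) unfolding assignments_def bvecs_def by (auto simp: g)
  ultimately show ?thesis unfolding assignments_def by blast
qed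

lemma circuit_sig_flip:
  assumes "l \<in> A" "A \<subseteq> J" "\<Union>E = J - A"
  shows "circuit_sig J V Jv A E F (flip x l)
    = (\<Sum>z\<in>extensions J E A x. weight V Jv F (flip z l))"
proof -
  have l: "l \<in> J" "l \<notin> \<Union>E" using assms by auto
  have flip_ext: "flip z l \<in> extensions J E A (flip y l)" if "z \<in> extensions J E A y" for z y
    using that flip_in_assignments[OF _ l] unfolding extensions_def by (auto simp: flip_apply)
  show ?thesis
    unfolding circuit_sig_eq_sum_weight
    by (rule sum.reindex_bij_witness[of _ "\<lambda>z. flip z l" "\<lambda>z. flip z l"])
      (use flip_ext[of _ x] flip_ext[of _ "flip x l"] in auto)
qed

lemma circuit_sig_eq_0_iff:
  assumes "circuit J V Jv A E F"
  shows "circuit_sig J V Jv A E F x = 0 \<longleftrightarrow> (\<forall>z\<in>extensions J E A x. weight V Jv F z = 0)"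
  using assms unfolding circuit_def circuit_sig_eq_sum_weight
  by (simp add: sum_nonneg_eq_0_iff finite_extensions weight_nonneg)

lemma sum_weight_flip_eq_at_vertex:
  assumes "circuit J V Jv A E F" "v \<in> V" "strictly_terraced (Jv v) (F v)"
    and "\<forall>z\<in>extensions J E A x. weight V Jv F z = 0"
    and "k \<in> Jv v" "k' \<in> Jv v"
  shows "(\<Sum>z\<in>extensions J E A x. weight V Jv F (flip z k))
    = (\<Sum>z\<in>extensions J E A x. weight V Jv F (flip z k'))"
proof (rule sum.cong[OF refl])
  fix z assume "z \<in> extensions J E A x"
  then have "weight V Jv F z = 0" using assms(4) by blast
  moreover have "finite V" using assms(1) unfolding circuit_def by simp
  moreover have "\<forall>u\<in>V. u \<noteq> v \<longrightarrow> Jv u \<inter> Jv v = {}"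
    using assms(1,2) unfolding circuit_def by auto
  ultimately show "weight V Jv F (flip z k) = weight V Jv F (flip z k')"
    using weight_flip_eq_at_vertex[where Jv = Jv and F = F and v = v, OF _ assms(2,5,6) _ assms(3)]
    by blast
qed

lemma sum_weight_flip_eq_on_edge:
  assumes "circuit J V Jv A E F" "e \<in> E" "k \<in> e" "k' \<in> e"
  shows "(\<Sum>z\<in>extensions J E A x. weight V Jv F (flip z k))
    = (\<Sum>z\<in>extensions J E A x. weight V Jv F (flip z k'))"
proof (cases "k = k'")
  case False
  have "card e = 2" "e \<subseteq> J - A" and disj: "\<forall>e\<in>E. \<forall>e'\<in>E. e \<noteq> e' \<longrightarrow> e \<inter> e' = {}"
    using assms(1,2) unfolding circuit_def by auto
  then obtain a b where "e = {a, b}" by (meson card_2_iff)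
  then have "{k, k'} \<in> E" using assms(2-4) False by (auto simp: insert_commute)
  have "k \<in> J - A" "k' \<in> J - A" using \<open>e \<subseteq> J - A\<close> assms(3,4) by auto
  define g where "g z = flip (flip z k) k'" for z
  have g_ext: "g z \<in> extensions J E A x" if "z \<in> extensions J E A x" for z
    using that flip_edge_in_assignments[OF _ \<open>{k, k'} \<in> E\<close> False _ _ disj]
      \<open>k \<in> J - A\<close> \<open>k' \<in> J - A\<close>
    unfolding extensions_def g_def by (auto simp: flip_apply)
  have g_g: "g (g z) = z" and flip_g: "flip (g z) k' = flip z k" for z
    unfolding g_def using False by (auto simp: fun_eq_iff flip_apply)
  show ?thesis
    by (rule sum.reindex_bij_witness[of _ g g]) (simp_all add: g_g flip_g g_ext)
qed simp

lemma circuit_connected_propagate: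
  assumes "circuit_connected V Jv E"
    and vertex: "\<forall>v\<in>V. \<forall>k\<in>Jv v. \<forall>k'\<in>Jv v. f k = f k'"
    and edge: "\<forall>e\<in>E. \<forall>k\<in>e. \<forall>k'\<in>e. f k = f k'"
    and "u \<in> V" "v \<in> V" "k \<in> Jv u" "k' \<in> Jv v"
  shows "f k = f k'"
proof -
  have "(u, v) \<in> (circuit_adj V Jv E)\<^sup>*"
    using assms(1,4,5) unfolding circuit_connected_def by blast
  then show ?thesis using \<open>k' \<in> Jv v\<close>
  proof (induction arbitrary: k' rule: rtrancl_induct)
    case base
    then show ?case using vertex \<open>u \<in> V\<close> \<open>k \<in> Jv u\<close> by blast
  next
    case (step w v)
    then obtain e a b where "e \<in> E" "a \<in> e" "b \<in> e" "a \<in> Jv w" "b \<in> Jv v" "v \<in> V"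
      unfolding circuit_adj_def by blast
    have "f k = f a" using step.IH \<open>a \<in> Jv w\<close> .
    also have "\<dots> = f b" using edge \<open>e \<in> E\<close> \<open>a \<in> e\<close> \<open>b \<in> e\<close> by blast
    also have "\<dots> = f k'" using vertex \<open>v \<in> V\<close> \<open>b \<in> Jv v\<close> \<open>k' \<in> Jv v\<close> by blast
    finally show ?case .
  qed
qed

theorem lemma14:
  fixes J :: "'j set" and V :: "'v set" and Jv :: "'v \<Rightarrow> 'j set"
    and A :: "'j set" and E :: "'j set set" and F :: "'v \<Rightarrow> ('j \<Rightarrow> bool) \<Rightarrow> rat"
  assumes "circuit J V Jv A E F"
    and "circuit_connected V Jv E"
    and "\<forall>v \<in> V. strictly_terraced (Jv v) (F v)"
  shows "strictly_terraced A (circuit_sig J V Jv A E F)"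
  unfolding strictly_terraced_def
proof (intro ballI impI)
  fix x i j assume "x \<in> bvecs A" "i \<in> A" "j \<in> A" and "circuit_sig J V Jv A E F x = 0"
  then have weight_zero: "\<forall>z\<in>extensions J E A x. weight V Jv F z = 0"
    using circuit_sig_eq_0_iff[OF assms(1)] by blast
  from assms(1) have "A \<subseteq> J" "\<Union>E = J - A" "(\<Union>v\<in>V. Jv v) = J"
    unfolding circuit_def by auto
  define H where "H k = (\<Sum>z\<in>extensions J E A x. weight V Jv F (flip z k))" for k
  have "\<forall>v\<in>V. \<forall>k\<in>Jv v. \<forall>k'\<in>Jv v. H k = H k'"
    unfolding H_def using sum_weight_flip_eq_at_vertex[OF assms(1) _ _ weight_zero] assms(3) by blast
  moreover have "\<forall>e\<in>E. \<forall>k\<in>e. \<forall>k'\<in>e. H k = H k'"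
    unfolding H_def using sum_weight_flip_eq_on_edge[OF assms(1)] by blast
  moreover obtain u v where "u \<in> V" "v \<in> V" "i \<in> Jv u" "j \<in> Jv v"
    using \<open>(\<Union>v\<in>V. Jv v) = J\<close> \<open>A \<subseteq> J\<close> \<open>i \<in> A\<close> \<open>j \<in> A\<close> by blast
  ultimately have "H i = H j" by (rule circuit_connected_propagate[OF assms(2)])
  then show "circuit_sig J V Jv A E F (flip x i) = circuit_sig J V Jv A E F (flip x j)"
    unfolding H_def circuit_sig_flip[OF \<open>i \<in> A\<close> \<open>A \<subseteq> J\<close> \<open>\<Union>E = J - A\<close>]
      circuit_sig_flip[OF \<open>j \<in> A\<close> \<open>A \<subseteq> J\<close> \<open>\<Union>E = J - A\<close>] .
qed

end
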